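(* Let $n\geq1$ be an integer, let $\alpha\geq5$, and let $f:\mathbb{R}^n\to[0,\infty)$ be an isotropic, log-concave function. Assume that $$ \sup_{\theta\in S^{n-1}}M_f(\theta,t)\leq e^{-5\alpha n}+\inf_{\theta\in S^{n-1}}M_f(\theta,t)\quad\text{for all }t\in\mathbb{R}. $$ Denote $g=f*\gamma_{n,1}$. Then $$ \sup_{\theta\in S^{n-1}}g(t\theta)\leq e^{-\alpha n}+\inf_{\theta\in S^{n-1}}g(t\theta)\quad\text{for all }t\geq0. $$
   Context: Log-concave: $f(\lambda x+(1-\lambda)y)\geq f(x)^\lambda f(y)^{1-\lambda}$; isotropic: $\int f=1$, $\int xf=0$, $\int\langle x,\theta\rangle^2f(x)dx=|\theta|^2$ for all $\theta$. $M_f(\theta,t)=\int_{\{x:\langle x,\theta\rangle\leq t\}}f(x)dx$ for $\theta\in S^{n-1}$, $t\in\mathbb{R}$. For $v>0$, $\gamma_{n,v}(x)=(2\pi v)^{-n/2}\exp(-|x|^2/(2v))$. $*$ denotes convolution. *)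

theory Defs
  imports "HOL-Analysis.Analysis"
begin

definition log_concave :: "('a::euclidean_space \<Rightarrow> real) \<Rightarrow> bool" where
  "log_concave f \<longleftrightarrow> (\<forall>x y. \<forall>l::real. 0 \<le> l \<and> l \<le> 1 \<longrightarrow>
      f (l *\<^sub>R x + (1 - l) *\<^sub>R y) \<ge> f x powr l * f y powr (1 - l))"

definition isotropic :: "('a::euclidean_space \<Rightarrow> real) \<Rightarrow> bool" where
  "isotropic f \<longleftrightarrow> integrable lebesgue f
     \<and> (\<integral>x. f x \<partial>lebesgue) = 1
     \<and> integrable lebesgue (\<lambda>x. f x *\<^sub>R x)
     \<and> (\<integral>x. f x *\<^sub>R x \<partial>lebesgue) = 0
     \<and> (\<forall>\<theta>. integrable lebesgue (\<lambda>x. (x \<bullet> \<theta>)\<^sup>2 * f x)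
          \<and> (\<integral>x. (x \<bullet> \<theta>)\<^sup>2 * f x \<partial>lebesgue) = (norm \<theta>)\<^sup>2)"

definition Mf :: "('a::euclidean_space \<Rightarrow> real) \<Rightarrow> 'a \<Rightarrow> real \<Rightarrow> real" where
  "Mf f \<theta> t = (\<integral>x\<in>{x. x \<bullet> \<theta> \<le> t}. f x \<partial>lebesgue)"

definition gauss :: "real \<Rightarrow> 'a::euclidean_space \<Rightarrow> real" where
  "gauss v x = (2 * pi * v) powr (- real DIM('a) / 2) * exp (- (norm x)\<^sup>2 / (2 * v))"

definition conv :: "('a::euclidean_space \<Rightarrow> real) \<Rightarrow> ('a \<Rightarrow> real) \<Rightarrow> 'a \<Rightarrow> real" where
  "conv f h x = (\<integral>y. f y * h (x - y) \<partial>lebesgue)"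

end

(* With c = (2 pi)^(-n/2), the Gaussian is its own cosine transform,
   gauss(w) = c * (integral of cos(z.w) gauss(z) dz), so by Fubini
   g(x) = c * (integral of gauss(z) Psi(z, z.x) dz), where Psi(v, a) = cos_transform f v a
   is the integral of cos(a - v.y) f(y) dy.  If R is a reflection with R(t theta) = t theta', the same
   formula gives g(t theta') with Psi(Rz, z.x) in place of Psi(z, z.x).  Now Psi(v, a)
   only depends on the marginal of f in the direction v/|v|, and integration by parts
   writes it through the distribution function M_f(v/|v|, .).  By hypothesis two such
   distribution functions differ by at most delta = exp(-5 alpha n), and by Chebyshev's
   inequality (isotropy) by at most 1/r^2, so |Psi(Rz, a) - Psi(z, a)| is at most
   |z| * (integral of min(delta, 1/r^2) dr) = 4 |z| sqrt delta.  The Gaussian mean of |z|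
   is at most n, and c * 4 n sqrt delta <= exp(-alpha n). *)

theory Submission
  imports Defs "HOL-Probability.Probability"
begin

lemma
  fixes h :: "'a::euclidean_space \<Rightarrow> real \<Rightarrow> 'b::{real_normed_field,banach,second_countable_topology}"
  assumes [measurable]: "\<And>b. b \<in> Basis \<Longrightarrow> h b \<in> borel_measurable borel"
    and integrable: "\<And>b. b \<in> Basis \<Longrightarrow> integrable lborel (h b)"
  shows integrable_prod_Basis: "integrable lborel (\<lambda>z::'a. \<Prod>b\<in>Basis. h b (z \<bullet> b))"
    and integral_prod_Basis:
      "(\<integral>z. (\<Prod>b\<in>Basis. h b (z \<bullet> b)) \<partial>(lborel::'a measure)) = (\<Prod>b\<in>Basis. integral\<^sup>L lborel (h b))"
proof -
  interpret finite_product_sigma_finite "\<lambda>_. lborel" "Basis::'a set"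
    by standard simp
  let ?e = "\<lambda>x. \<Sum>b\<in>Basis. x b *\<^sub>R b"
  have e_measurable: "?e \<in> (\<Pi>\<^sub>M b\<in>Basis. lborel) \<rightarrow>\<^sub>M (borel :: 'a measure)"
    by measurable
  have prod_measurable: "(\<lambda>z::'a. \<Prod>b\<in>Basis. h b (z \<bullet> b)) \<in> borel_measurable borel"
    by measurable
  have comp: "(\<lambda>x. \<Prod>b\<in>Basis. h b (?e x \<bullet> b)) = (\<lambda>x. \<Prod>b\<in>Basis. h b (x b))"
    by (auto cong: prod.cong)
  have "integrable (\<Pi>\<^sub>M b\<in>Basis. lborel) (\<lambda>x. \<Prod>b\<in>Basis. h b (x b))"
    by (rule product_integrable_prod) (auto intro: integrable)
  then show "integrable lborel (\<lambda>z::'a. \<Prod>b\<in>Basis. h b (z \<bullet> b))"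
    by (subst lborel_eq) (simp add: integrable_distr_eq[OF e_measurable prod_measurable] comp)
  have "(\<integral>z. (\<Prod>b\<in>Basis. h b (z \<bullet> b)) \<partial>(lborel::'a measure))
      = (\<integral>x. (\<Prod>b\<in>Basis. h b (x b)) \<partial>(\<Pi>\<^sub>M b\<in>Basis. lborel))"
    by (subst lborel_eq) (simp add: integral_distr[OF e_measurable prod_measurable] comp)
  also have "\<dots> = (\<Prod>b\<in>Basis. integral\<^sup>L lborel (h b))"
    by (rule product_integral_prod) (auto intro: integrable)
  finally show "(\<integral>z. (\<Prod>b\<in>Basis. h b (z \<bullet> b)) \<partial>(lborel::'a measure))
      = (\<Prod>b\<in>Basis. integral\<^sup>L lborel (h b))" .
qed

lemma norm_square_eq_sum_Basis: "(norm z)\<^sup>2 = (\<Sum>b\<in>Basis. (z \<bullet> b)\<^sup>2)"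
  unfolding power2_norm_eq_inner by (subst euclidean_inner) (simp add: power2_eq_square)

lemma exp_minus_norm_square_half: "exp (- (norm z)\<^sup>2 / 2) = (\<Prod>b\<in>Basis. exp (- (z \<bullet> b)\<^sup>2 / 2))"
  unfolding norm_square_eq_sum_Basis by (simp add: exp_sum[symmetric] sum_divide_distrib sum_negf)

lemma gauss_eq_prod_std_normal_density:
  "gauss 1 (z::'a::euclidean_space) = (\<Prod>b\<in>Basis. std_normal_density (z \<bullet> b))"
proof -
  have "(2 * pi) powr (- real DIM('a) / 2) = inverse (((2 * pi) powr (1/2)) powr real DIM('a))"
    by (simp add: powr_minus[symmetric] powr_powr)
  also have "\<dots> = (\<Prod>b\<in>(Basis::'a set). 1 / sqrt (2 * pi))"
    by (simp add: powr_half_sqrt powr_realpow prod_constant power_one_over inverse_eq_divide)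
  finally show ?thesis
    unfolding gauss_def std_normal_density_def prod.distrib exp_minus_norm_square_half[symmetric]
    by simp
qed

lemma gauss_nonneg: "0 \<le> gauss v x"
  unfolding gauss_def by simp

lemma gauss_measurable [measurable]: "gauss v \<in> borel_measurable borel"
  unfolding gauss_def by measurable

lemma integrable_std_normal_density: "integrable lborel std_normal_density"
  and integral_std_normal_density: "integral\<^sup>L lborel std_normal_density = 1"
  using std_normal_moment_even[of 0] by (simp_all add: has_bochner_integral_iff)

lemma integrable_gauss: "integrable lborel (gauss 1 :: 'a::euclidean_space \<Rightarrow> real)"
  using integrable_prod_Basis[of "\<lambda>_::'a. std_normal_density"]
  by (simp add: gauss_eq_prod_std_normal_density[abs_def] integrable_std_normal_density)

lemma integral_gauss: "integral\<^sup>L lborel (gauss 1 :: 'a::euclidean_space \<Rightarrow> real) = 1"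
  using integral_prod_Basis[of "\<lambda>_::'a. std_normal_density"]
  by (simp add: gauss_eq_prod_std_normal_density[abs_def] integrable_std_normal_density
      integral_std_normal_density)

lemma integral_std_normal_density_iexp:
  "(\<integral>u. complex_of_real (std_normal_density u) * iexp (u * t) \<partial>lborel) = exp (- t\<^sup>2 / 2)"
proof -
  have "char std_normal_distribution t
      = (\<integral>u. complex_of_real (std_normal_density u) * iexp (u * t) \<partial>lborel)"
    unfolding char_def by (subst integral_density) (auto simp: scaleR_conv_of_real mult.commute)
  then show ?thesis
    using char_std_normal_distribution by simp
qed

lemma integrable_std_normal_density_iexp:
  "integrable lborel (\<lambda>u. complex_of_real (std_normal_density u) * iexp (u * t))"
  by (rule Bochner_Integration.integrable_bound[OF integrable_std_normal_density])
    (auto simp: norm_mult)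

lemma integral_cos_inner_gauss:
  "(\<integral>z. cos (z \<bullet> w) * gauss 1 z \<partial>lborel) = exp (- (norm w)\<^sup>2 / 2)"
proof -
  define h where "h b u = complex_of_real (std_normal_density u) * iexp (u * (w \<bullet> b))" for b u
  have h_measurable: "h b \<in> borel_measurable borel" for b
    unfolding h_def by measurable
  have integrable: "integrable lborel (h b)" for b
    unfolding h_def by (rule integrable_std_normal_density_iexp)
  have "iexp (z \<bullet> w) = (\<Prod>b\<in>Basis. iexp ((z \<bullet> b) * (w \<bullet> b)))" for z
    by (subst euclidean_inner) (simp add: exp_sum[symmetric] sum_distrib_left)
  then have "(\<Prod>b\<in>Basis. h b (z \<bullet> b)) = complex_of_real (gauss 1 z) * iexp (z \<bullet> w)" for z
    unfolding h_def gauss_eq_prod_std_normal_density prod.distrib by simp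
  then have cos_eq: "cos (z \<bullet> w) * gauss 1 z = Re (\<Prod>b\<in>Basis. h b (z \<bullet> b))" for z
    by (simp add: Re_exp)
  have "(\<integral>z. cos (z \<bullet> w) * gauss 1 z \<partial>lborel) = Re (\<Prod>b\<in>Basis. integral\<^sup>L lborel (h b))"
    unfolding cos_eq integral_Re[OF integrable_prod_Basis[OF h_measurable integrable]]
    by (simp add: integral_prod_Basis[OF h_measurable integrable])
  also have "\<dots> = exp (- (norm w)\<^sup>2 / 2)"
    unfolding h_def integral_std_normal_density_iexp exp_minus_norm_square_half
    by (simp flip: of_real_prod)
  finally show ?thesis .
qed

lemma gauss_eq_integral_cos:
  "gauss 1 (w::'a::euclidean_space)
     = (2 * pi) powr (- real DIM('a) / 2) * (\<integral>z. cos (z \<bullet> w) * gauss 1 z \<partial>lborel)"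
  unfolding integral_cos_inner_gauss by (simp add: gauss_def)

lemma
  fixes c :: "'a::euclidean_space"
  assumes c: "c \<in> Basis"
  shows integrable_abs_inner_gauss: "integrable lborel (\<lambda>z::'a. \<bar>z \<bullet> c\<bar> * gauss 1 z)"
    and integral_abs_inner_gauss_le: "(\<integral>z. \<bar>z \<bullet> c\<bar> * gauss 1 z \<partial>lborel) \<le> 1"
proof -
  have abs_moment: "has_bochner_integral lborel (\<lambda>u. \<bar>u\<bar> * std_normal_density u) (sqrt (2 / pi))"
    using std_normal_moment_abs_odd[of 0] by (simp add: mult.commute)
  define h where "h = (\<lambda>b u. (if b = c then \<bar>u\<bar> else 1) * std_normal_density u)"
  have h_measurable: "h b \<in> borel_measurable borel" for b
    unfolding h_def by measurable
  have integral_h: "has_bochner_integral lborel (h b) (if b = c then sqrt (2 / pi) else 1)" for b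
    using abs_moment std_normal_moment_even[of 0] by (cases "b = c") (simp_all add: h_def)
  have integrable: "integrable lborel (h b)" for b
    using integral_h[of b] by (simp add: has_bochner_integral_iff)
  have eq: "\<bar>z \<bullet> c\<bar> * gauss 1 z = (\<Prod>b\<in>Basis. h b (z \<bullet> b))" for z :: 'a
    unfolding h_def prod.distrib gauss_eq_prod_std_normal_density
    using c by (simp add: prod.If_cases Int_absorb1)
  show "integrable lborel (\<lambda>z::'a. \<bar>z \<bullet> c\<bar> * gauss 1 z)"
    unfolding eq by (rule integrable_prod_Basis[OF h_measurable integrable])
  have "(\<integral>z. \<bar>z \<bullet> c\<bar> * gauss 1 z \<partial>lborel)
      = (\<Prod>b\<in>(Basis::'a set). if b = c then sqrt (2 / pi) else 1)"
    unfolding eq integral_prod_Basis[OF h_measurable integrable] using integral_h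
    by (simp add: has_bochner_integral_iff)
  also have "\<dots> = sqrt (2 / pi)"
    using c by (simp add: prod.If_cases Int_absorb1)
  also have "\<dots> \<le> 1"
    using pi_gt3 by (simp add: real_sqrt_le_1_iff)
  finally show "(\<integral>z. \<bar>z \<bullet> c\<bar> * gauss 1 z \<partial>lborel) \<le> 1" .
qed

lemma
  shows integrable_norm_gauss: "integrable lborel (\<lambda>z::'a::euclidean_space. norm z * gauss 1 z)"
    and integral_norm_gauss_le: "(\<integral>z. norm z * gauss 1 z \<partial>(lborel::'a measure)) \<le> real DIM('a)"
proof -
  let ?l1 = "\<lambda>z::'a. \<Sum>c\<in>Basis. \<bar>z \<bullet> c\<bar> * gauss 1 z"
  have l1: "integrable lborel ?l1"
    by (intro Bochner_Integration.integrable_sum integrable_abs_inner_gauss)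
  have le: "norm z * gauss 1 z \<le> ?l1 z" for z
    using mult_right_mono[OF norm_le_l1[of z] gauss_nonneg[of 1 z]] by (simp add: sum_distrib_right)
  show integrable: "integrable lborel (\<lambda>z::'a. norm z * gauss 1 z)"
    by (rule Bochner_Integration.integrable_bound[OF l1])
      (use le in \<open>auto simp: abs_of_nonneg gauss_nonneg intro: order_trans[OF _ abs_ge_self]\<close>)
  have "(\<integral>z. norm z * gauss 1 z \<partial>(lborel::'a measure)) \<le> (\<integral>z. ?l1 z \<partial>lborel)"
    by (rule integral_mono[OF integrable l1 le])
  also have "\<dots> = (\<Sum>c\<in>(Basis::'a set). \<integral>z. \<bar>z \<bullet> c\<bar> * gauss 1 z \<partial>lborel)"
    by (intro Bochner_Integration.integral_sum integrable_abs_inner_gauss)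
  also have "\<dots> \<le> (\<Sum>c\<in>(Basis::'a set). 1)"
    by (intro sum_mono integral_abs_inner_gauss_le)
  finally show "(\<integral>z. norm z * gauss 1 z \<partial>(lborel::'a measure)) \<le> real DIM('a)"
    by simp
qed

lemma sigma_finite_lebesgue: "sigma_finite_measure (lebesgue :: 'a::euclidean_space measure)"
proof -
  obtain A :: "'a set set" where "countable A" "A \<subseteq> sets lborel" "\<Union>A = space lborel"
    "\<forall>a\<in>A. emeasure lborel a \<noteq> \<infinity>"
    using lborel.sigma_finite_countable by blast
  then show ?thesis
    by unfold_locales (auto intro!: exI[of _ A])
qed

text \<open>The density is only Lebesgue measurable, so Fubini is applied on
  \<open>lebesgue \<Otimes>\<^sub>M lborel\<close> rather than on \<open>lborel \<Otimes>\<^sub>M lborel\<close>.\<close>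

interpretation lebesgue_lborel: pair_sigma_finite
  "lebesgue :: 'a::euclidean_space measure" "lborel :: 'b::euclidean_space measure"
  by (intro pair_sigma_finite.intro sigma_finite_lebesgue lborel.sigma_finite_measure_axioms)

lemma inner_borel_measurable_lebesgue [measurable]: "(\<lambda>x. x \<bullet> w) \<in> borel_measurable lebesgue"
  by (intro measurable_completion) measurable

lemma halfspace_sets_lebesgue:
  "{x. x \<bullet> \<theta> \<le> t} \<in> sets lebesgue" "{x. t < x \<bullet> \<theta>} \<in> sets lebesgue"
  using pred_def[of "\<lambda>x. x \<bullet> \<theta> \<le> t" lebesgue] pred_def[of "\<lambda>x. t < x \<bullet> \<theta>" lebesgue]
  by simp_all measurable

definition layer_kernel :: "real \<Rightarrow> real \<Rightarrow> real" where
  "layer_kernel u r = (if 0 < r \<and> r < u then 1 else if u \<le> r \<and> r < 0 then -1 else 0)"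

lemma layer_kernel_measurable [measurable]:
  "(\<lambda>x. layer_kernel (f x) (g x)) \<in> borel_measurable M"
  if [measurable]: "f \<in> borel_measurable M" "g \<in> borel_measurable M"
  unfolding layer_kernel_def by measurable

lemma abs_layer_kernel_le: "\<bar>layer_kernel u r\<bar> \<le> indicator {-\<bar>u\<bar>..\<bar>u\<bar>} r"
  unfolding layer_kernel_def by (auto simp: indicator_def)

lemma integrable_mult_layer_kernel:
  fixes g :: "real \<Rightarrow> real"
  assumes [measurable]: "g \<in> borel_measurable borel" and bound: "\<And>r. \<bar>g r\<bar> \<le> B"
  shows "integrable lborel (\<lambda>r. g r * layer_kernel u r)"
proof (rule Bochner_Integration.integrable_bound)
  show "integrable lborel (\<lambda>r. B * indicator {-\<bar>u\<bar>..\<bar>u\<bar>} r)"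
    by (intro integrable_mult_right) auto
  show "AE r in lborel. norm (g r * layer_kernel u r) \<le> norm (B * indicator {-\<bar>u\<bar>..\<bar>u\<bar>} r)"
    using bound[of 0]
    by (intro AE_I2) (auto simp: abs_mult intro!: mult_mono bound abs_layer_kernel_le)
qed measurable

lemma integral_deriv_layer_kernel:
  fixes \<phi> \<phi>' :: "real \<Rightarrow> real"
  assumes deriv: "\<And>r. (\<phi> has_real_derivative \<phi>' r) (at r)"
    and cont: "continuous_on UNIV \<phi>'"
  shows "(\<integral>r. \<phi>' r * layer_kernel u r \<partial>lborel) = \<phi> u - \<phi> 0"
proof -
  have FTC: "(\<integral>r. indicator {a..b} r *\<^sub>R \<phi>' r \<partial>lborel) = \<phi> b - \<phi> a" if "a \<le> b" for a b
    using deriv cont that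
    by (intro integral_FTC_atLeastAtMost)
      (auto simp: has_real_derivative_iff_has_vector_derivative
        intro: has_vector_derivative_at_within continuous_on_subset)
  have [measurable]: "\<phi>' \<in> borel_measurable borel"
    using cont by (rule borel_measurable_continuous_onI)
  have AE_nz: "AE r in lborel. r \<noteq> 0 \<and> r \<noteq> u"
    using AE_lborel_singleton[of 0] AE_lborel_singleton[of u] by eventually_elim auto
  show ?thesis
  proof (cases "0 \<le> u")
    case True
    have "(\<integral>r. \<phi>' r * layer_kernel u r \<partial>lborel) = (\<integral>r. indicator {0..u} r *\<^sub>R \<phi>' r \<partial>lborel)"
      by (rule integral_cong_AE) (use AE_nz True in \<open>auto simp: layer_kernel_def indicator_def\<close>)
    then show ?thesis
      using FTC[OF True] by simp
  next
    case False
    have "(\<integral>r. \<phi>' r * layer_kernel u r \<partial>lborel) = (\<integral>r. - (indicator {u..0} r *\<^sub>R \<phi>' r) \<partial>lborel)"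
      by (rule integral_cong_AE) (use AE_nz False in \<open>auto simp: layer_kernel_def indicator_def\<close>)
    then show ?thesis
      using FTC[of u 0] False by simp
  qed
qed

definition signed_tail :: "('a::euclidean_space \<Rightarrow> real) \<Rightarrow> 'a \<Rightarrow> real \<Rightarrow> real" where
  "signed_tail f \<omega> r = (if 0 < r then 1 - Mf f \<omega> r else if r < 0 then - Mf f \<omega> r else 0)"

locale isotropic_density =
  fixes f :: "'a::euclidean_space \<Rightarrow> real"
  assumes nonneg: "\<And>x. 0 \<le> f x"
    and isotropic: "isotropic f"
begin

lemma integrable: "integrable lebesgue f"
  and integral: "(\<integral>x. f x \<partial>lebesgue) = 1"
  and integrable_moment: "integrable lebesgue (\<lambda>x. (x \<bullet> \<theta>)\<^sup>2 * f x)"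
  and integral_moment: "(\<integral>x. (x \<bullet> \<theta>)\<^sup>2 * f x \<partial>lebesgue) = (norm \<theta>)\<^sup>2"
  using isotropic unfolding isotropic_def by auto

lemma borel_measurable [measurable]: "f \<in> borel_measurable lebesgue"
  using integrable by auto

lemma integrable_indicator: "S \<in> sets lebesgue \<Longrightarrow> integrable lebesgue (\<lambda>x. indicator S x * f x)"
  using integrable_real_mult_indicator[OF _ integrable] by (simp add: mult.commute)

lemma Mf_eq_integral_indicator: "Mf f \<theta> t = (\<integral>x. indicator {x. x \<bullet> \<theta> \<le> t} x * f x \<partial>lebesgue)"
  by (simp add: Mf_def set_lebesgue_integral_def)

lemma one_minus_Mf: "1 - Mf f \<theta> t = (\<integral>x. indicator {x. t < x \<bullet> \<theta>} x * f x \<partial>lebesgue)"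
proof -
  have "1 = (\<integral>x. indicator {x. x \<bullet> \<theta> \<le> t} x * f x + indicator {x. t < x \<bullet> \<theta>} x * f x \<partial>lebesgue)"
    unfolding integral[symmetric]
    by (rule Bochner_Integration.integral_cong) (auto simp: indicator_def)
  also have "\<dots> = Mf f \<theta> t + (\<integral>x. indicator {x. t < x \<bullet> \<theta>} x * f x \<partial>lebesgue)"
    unfolding Mf_eq_integral_indicator
    by (intro Bochner_Integration.integral_add integrable_indicator halfspace_sets_lebesgue)
  finally show ?thesis by simp
qed

lemma Mf_nonneg: "0 \<le> Mf f \<theta> t"
  unfolding Mf_eq_integral_indicator by (simp add: nonneg)

lemma Mf_le_1: "Mf f \<theta> t \<le> 1"
proof -
  have "0 \<le> (\<integral>x. indicator {x. t < x \<bullet> \<theta>} x * f x \<partial>lebesgue)"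
    by (simp add: nonneg)
  then show ?thesis
    unfolding one_minus_Mf[symmetric] by simp
qed

lemma integral_indicator_le_inverse_square:
  assumes "norm \<omega> = 1" "r \<noteq> 0" "S \<in> sets lebesgue"
    and far: "\<And>x. x \<in> S \<Longrightarrow> r\<^sup>2 \<le> (x \<bullet> \<omega>)\<^sup>2"
  shows "(\<integral>x. indicator S x * f x \<partial>lebesgue) \<le> 1 / r\<^sup>2"
proof -
  have "(\<integral>x. indicator S x * f x \<partial>lebesgue) \<le> (\<integral>x. (x \<bullet> \<omega>)\<^sup>2 * f x / r\<^sup>2 \<partial>lebesgue)"
  proof (rule integral_mono)
    show "integrable lebesgue (\<lambda>x. indicator S x * f x)"
      using assms(3) by (rule integrable_indicator)
    show "integrable lebesgue (\<lambda>x. (x \<bullet> \<omega>)\<^sup>2 * f x / r\<^sup>2)"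
      by (intro integrable_divide integrable_moment)
    fix x
    have "indicator S x \<le> (x \<bullet> \<omega>)\<^sup>2 / r\<^sup>2"
      using far[of x] assms(2) by (auto simp: indicator_def field_simps)
    from mult_right_mono[OF this nonneg[of x]]
    show "indicator S x * f x \<le> (x \<bullet> \<omega>)\<^sup>2 * f x / r\<^sup>2"
      by (simp add: times_divide_eq_left)
  qed
  also have "\<dots> = 1 / r\<^sup>2"
    using integral_moment[of \<omega>] assms(1) by simp
  finally show ?thesis .
qed

lemma Mf_le_inverse_square:
  assumes "norm \<omega> = 1" "r < 0"
  shows "Mf f \<omega> r \<le> 1 / r\<^sup>2"
  unfolding Mf_eq_integral_indicator
proof (rule integral_indicator_le_inverse_square)
  show "r\<^sup>2 \<le> (x \<bullet> \<omega>)\<^sup>2" if "x \<in> {x. x \<bullet> \<omega> \<le> r}" for x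
    using that assms(2) by (simp add: abs_le_square_iff[symmetric])
qed (use assms in auto)

lemma one_minus_Mf_le_inverse_square:
  assumes "norm \<omega> = 1" "0 < r"
  shows "1 - Mf f \<omega> r \<le> 1 / r\<^sup>2"
  unfolding one_minus_Mf
proof (rule integral_indicator_le_inverse_square)
  show "r\<^sup>2 \<le> (x \<bullet> \<omega>)\<^sup>2" if "x \<in> {x. r < x \<bullet> \<omega>}" for x
    using that assms(2) by (simp add: abs_le_square_iff[symmetric])
qed (use assms in auto)

lemma integral_layer_kernel: "(\<integral>y. f y * layer_kernel (y \<bullet> \<omega>) r \<partial>lebesgue) = signed_tail f \<omega> r"
proof -
  consider "0 < r" | "r < 0" | "r = 0" by linarith
  then show ?thesis
  proof cases
    case 1
    have "(\<integral>y. f y * layer_kernel (y \<bullet> \<omega>) r \<partial>lebesgue)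
        = (\<integral>x. indicator {x. r < x \<bullet> \<omega>} x * f x \<partial>lebesgue)"
      by (rule Bochner_Integration.integral_cong)
        (use 1 in \<open>auto simp: layer_kernel_def indicator_def\<close>)
    then show ?thesis
      using 1 by (simp add: signed_tail_def one_minus_Mf)
  next
    case 2
    have "(\<integral>y. f y * layer_kernel (y \<bullet> \<omega>) r \<partial>lebesgue)
        = (\<integral>x. - (indicator {x. x \<bullet> \<omega> \<le> r} x * f x) \<partial>lebesgue)"
      by (rule Bochner_Integration.integral_cong)
        (use 2 in \<open>auto simp: layer_kernel_def indicator_def\<close>)
    then show ?thesis
      using 2 by (simp add: signed_tail_def Mf_eq_integral_indicator)
  qed (simp add: signed_tail_def layer_kernel_def)
qed

lemma integrable_mult_layer_kernel_pair:
  fixes g :: "real \<Rightarrow> real"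
  assumes [measurable]: "g \<in> borel_measurable borel" and bound: "\<And>r. \<bar>g r\<bar> \<le> B"
  shows "integrable (lebesgue \<Otimes>\<^sub>M lborel) (\<lambda>(y, r). f y * (g r * layer_kernel (y \<bullet> \<omega>) r))"
proof (rule lebesgue_lborel.Fubini_integrable)
  let ?F = "\<lambda>y r. f y * (g r * layer_kernel (y \<bullet> \<omega>) r)"
  have norm_integral_le: "(\<integral>r. norm (?F y r) \<partial>lborel) \<le> B * (f y + (y \<bullet> \<omega>)\<^sup>2 * f y)" for y
  proof -
    let ?u = "y \<bullet> \<omega>"
    have "(\<integral>r. norm (?F y r) \<partial>lborel) \<le> (\<integral>r. f y * B * indicator {-\<bar>?u\<bar>..\<bar>?u\<bar>} r \<partial>lborel)"
    proof (rule integral_mono)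
      show "integrable lborel (\<lambda>r. norm (?F y r))"
        by (intro integrable_norm integrable_mult_right integrable_mult_layer_kernel[OF assms])
      show "integrable lborel (\<lambda>r. f y * B * indicator {-\<bar>?u\<bar>..\<bar>?u\<bar>} r)"
        by (intro integrable_mult_right) auto
      show "norm (?F y r) \<le> f y * B * indicator {-\<bar>?u\<bar>..\<bar>?u\<bar>} r" for r
        using nonneg[of y] bound[of 0]
        by (auto simp: abs_mult mult.assoc
            intro!: mult_left_mono mult_mono bound abs_layer_kernel_le)
    qed
    also have "\<dots> = B * (f y * (2 * \<bar>?u\<bar>))"
      by simp
    also have "\<dots> \<le> B * (f y * (1 + ?u\<^sup>2))"
    proof -
      have "2 * \<bar>?u\<bar> \<le> 1 + ?u\<^sup>2"
        using sum_power2_ge_zero[of "\<bar>?u\<bar> - 1" 0] by (simp add: power2_eq_square algebra_simps)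
      then show ?thesis
        using nonneg[of y] bound[of 0] by (intro mult_left_mono) auto
    qed
    finally show ?thesis
      by (simp add: algebra_simps)
  qed
  show "integrable lebesgue (\<lambda>y. \<integral>r. norm (case (y, r) of (y, r) \<Rightarrow> ?F y r) \<partial>lborel)"
  proof (rule Bochner_Integration.integrable_bound)
    show "integrable lebesgue (\<lambda>y. B * (f y + (y \<bullet> \<omega>)\<^sup>2 * f y))"
      by (intro integrable_mult_right Bochner_Integration.integrable_add integrable integrable_moment)
    show "AE y in lebesgue. norm (\<integral>r. norm (case (y, r) of (y, r) \<Rightarrow> ?F y r) \<partial>lborel)
        \<le> norm (B * (f y + (y \<bullet> \<omega>)\<^sup>2 * f y))"
      using norm_integral_le by (intro AE_I2) (auto intro: order_trans[OF _ abs_ge_self])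
  qed measurable
  show "AE y in lebesgue. integrable lborel (\<lambda>r. case (y, r) of (y, r) \<Rightarrow> ?F y r)"
    by (intro AE_I2) (simp add: integrable_mult_right integrable_mult_layer_kernel[OF assms])
qed measurable

lemma
  fixes \<phi> \<phi>' :: "real \<Rightarrow> real"
  assumes deriv: "\<And>r. (\<phi> has_real_derivative \<phi>' r) (at r)"
    and cont: "continuous_on UNIV \<phi>'"
    and bound: "\<And>r. \<bar>\<phi>' r\<bar> \<le> B"
  shows integrable_deriv_signed_tail: "integrable lborel (\<lambda>r. \<phi>' r * signed_tail f \<omega> r)"
    and integral_comp_inner_eq:
      "(\<integral>y. \<phi> (y \<bullet> \<omega>) * f y \<partial>lebesgue) = \<phi> 0 + (\<integral>r. \<phi>' r * signed_tail f \<omega> r \<partial>lborel)"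
proof -
  have [measurable]: "\<phi>' \<in> borel_measurable borel"
    using cont by (rule borel_measurable_continuous_onI)
  define F where "F y r = f y * (\<phi>' r * layer_kernel (y \<bullet> \<omega>) r)" for y r
  have F_pair_integrable: "integrable (lebesgue \<Otimes>\<^sub>M lborel) (\<lambda>(y, r). F y r)"
    unfolding F_def by (rule integrable_mult_layer_kernel_pair) (use bound in auto)
  have F_integral_snd: "(\<integral>r. F y r \<partial>lborel) = f y * (\<phi> (y \<bullet> \<omega>) - \<phi> 0)" for y
    unfolding F_def by (simp add: integral_deriv_layer_kernel[OF deriv cont])
  have F_integral_fst: "(\<integral>y. F y r \<partial>lebesgue) = \<phi>' r * signed_tail f \<omega> r" for r
    unfolding F_def integral_layer_kernel[symmetric] by (simp add: ac_simps)
  show "integrable lborel (\<lambda>r. \<phi>' r * signed_tail f \<omega> r)"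
    using lebesgue_lborel.integrable_snd[OF F_pair_integrable] by (simp add: F_integral_fst)
  have "(\<integral>y. \<phi> (y \<bullet> \<omega>) * f y \<partial>lebesgue) = (\<integral>y. \<phi> 0 * f y + (\<integral>r. F y r \<partial>lborel) \<partial>lebesgue)"
    by (rule Bochner_Integration.integral_cong) (auto simp: F_integral_snd algebra_simps)
  also have "\<dots> = \<phi> 0 + (\<integral>y. (\<integral>r. F y r \<partial>lborel) \<partial>lebesgue)"
    using lebesgue_lborel.integrable_fst[OF F_pair_integrable] integrable by (simp add: integral)
  also have "(\<integral>y. (\<integral>r. F y r \<partial>lborel) \<partial>lebesgue) = (\<integral>r. \<phi>' r * signed_tail f \<omega> r \<partial>lborel)"
    using lebesgue_lborel.Fubini_integral[OF F_pair_integrable] by (simp add: F_integral_fst)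
  finally show "(\<integral>y. \<phi> (y \<bullet> \<omega>) * f y \<partial>lebesgue) = \<phi> 0 + (\<integral>r. \<phi>' r * signed_tail f \<omega> r \<partial>lborel)" .
qed

text \<open>At \<open>r = 0\<close> the bound is \<open>min \<delta> 0 = 0\<close>, since \<open>1 / 0 = 0\<close>.\<close>

lemma signed_tail_diff_le:
  assumes "norm \<omega> = 1" "norm \<omega>' = 1" and close: "\<And>r. \<bar>Mf f \<omega> r - Mf f \<omega>' r\<bar> \<le> \<delta>"
  shows "\<bar>signed_tail f \<omega> r - signed_tail f \<omega>' r\<bar> \<le> min \<delta> (1 / r\<^sup>2)"
proof -
  consider "0 < r" | "r < 0" | "r = 0" by linarith
  then show ?thesis
  proof cases
    case 1
    then show ?thesis
      using close[of r] Mf_le_1[of \<omega> r] Mf_le_1[of \<omega>' r]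
        one_minus_Mf_le_inverse_square[OF assms(1) 1] one_minus_Mf_le_inverse_square[OF assms(2) 1]
      by (auto simp: signed_tail_def abs_le_iff)
  next
    case 2
    then show ?thesis
      using close[of r] Mf_nonneg[of \<omega> r] Mf_nonneg[of \<omega>' r]
        Mf_le_inverse_square[OF assms(1) 2] Mf_le_inverse_square[OF assms(2) 2]
      by (auto simp: signed_tail_def abs_le_iff)
  qed (use close[of 0] in \<open>simp add: signed_tail_def\<close>)
qed

end

lemma has_bochner_integral_min_inverse_square:
  assumes "0 < \<delta>"
  shows "has_bochner_integral lborel (\<lambda>r. min \<delta> (1 / r\<^sup>2)) (4 * sqrt \<delta>)"
proof -
  define R where "R = 1 / sqrt \<delta>"
  have R: "0 < R" "\<delta> = 1 / R\<^sup>2"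
    using assms by (simp_all add: R_def power_divide)
  have "((\<lambda>r. 1 / r ^ 2) has_integral 1 / R) {R..}"
    using has_integral_inverse_power_to_inf[of 2 R] R by simp
  then have "integral\<^sup>N lborel (\<lambda>r. indicator {R..} r * (1 / r\<^sup>2)) = ennreal (1 / R)"
    by (intro nn_integral_has_integral_lebesgue) simp
  then have tail: "has_bochner_integral lborel (\<lambda>r. indicator {R..} r * (1 / r\<^sup>2)) (1 / R)"
    by (intro has_bochner_integral_nn_integral) (use R in auto)
  have body: "has_bochner_integral lborel (\<lambda>r. indicator {0<..<R} r * \<delta>) (R * \<delta>)"
    using has_bochner_integral_mult_left[OF has_bochner_integral_real_indicator[of "{0<..<R}" lborel],
        of \<delta>] R
    by (simp add: mult.commute)
  have "indicator {0..} r *\<^sub>R min \<delta> (1 / r\<^sup>2)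
      = indicator {0<..<R} r * \<delta> + indicator {R..} r * (1 / r\<^sup>2)" for r
  proof -
    have "\<delta> \<le> 1 / r\<^sup>2" if "0 < r" "r < R"
      unfolding R(2) using that by (intro divide_left_mono power_strict_mono less_imp_le) auto
    moreover have "1 / r\<^sup>2 \<le> \<delta>" if "R \<le> r"
      unfolding R(2) using that R(1) by (intro divide_left_mono power_mono) auto
    ultimately show ?thesis
      using R(1) assms by (auto simp: indicator_def min_def)
  qed
  then have "has_bochner_integral lborel (\<lambda>r. indicator {0..} r *\<^sub>R min \<delta> (1 / r\<^sup>2)) (R * \<delta> + 1 / R)"
    using has_bochner_integral_add[OF body tail] by simp
  then have "has_bochner_integral lborel (\<lambda>r. min \<delta> (1 / r\<^sup>2)) (2 *\<^sub>R (R * \<delta> + 1 / R))"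
    by (rule has_bochner_integral_even_function) simp
  moreover have "2 *\<^sub>R (R * \<delta> + 1 / R) = 4 * sqrt \<delta>"
    using assms by (simp add: R_def field_simps)
  ultimately show ?thesis
    by simp
qed

context isotropic_density
begin

lemma integral_comp_inner_diff_le:
  fixes \<phi> \<phi>' :: "real \<Rightarrow> real"
  assumes deriv: "\<And>r. (\<phi> has_real_derivative \<phi>' r) (at r)"
    and cont: "continuous_on UNIV \<phi>'"
    and bound: "\<And>r. \<bar>\<phi>' r\<bar> \<le> B"
    and unit: "norm \<omega> = 1" "norm \<omega>' = 1" and \<delta>: "0 < \<delta>"
    and close: "\<And>r. \<bar>Mf f \<omega> r - Mf f \<omega>' r\<bar> \<le> \<delta>"
  shows "\<bar>(\<integral>y. \<phi> (y \<bullet> \<omega>) * f y \<partial>lebesgue) - (\<integral>y. \<phi> (y \<bullet> \<omega>') * f y \<partial>lebesgue)\<bar> \<le> B * (4 * sqrt \<delta>)"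
proof -
  note integrable_tail = integrable_deriv_signed_tail[OF deriv cont bound]
  have min_integral: "has_bochner_integral lborel (\<lambda>r. B * min \<delta> (1 / r\<^sup>2)) (B * (4 * sqrt \<delta>))"
    by (intro has_bochner_integral_mult_right has_bochner_integral_min_inverse_square \<delta>)
  have "(\<integral>y. \<phi> (y \<bullet> \<omega>) * f y \<partial>lebesgue) - (\<integral>y. \<phi> (y \<bullet> \<omega>') * f y \<partial>lebesgue)
      = (\<integral>r. \<phi>' r * signed_tail f \<omega> r \<partial>lborel) - (\<integral>r. \<phi>' r * signed_tail f \<omega>' r \<partial>lborel)"
    by (simp add: integral_comp_inner_eq[OF deriv cont bound])
  also have "\<dots> = (\<integral>r. \<phi>' r * (signed_tail f \<omega> r - signed_tail f \<omega>' r) \<partial>lborel)"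
    using Bochner_Integration.integral_diff[OF integrable_tail integrable_tail]
    by (simp add: right_diff_distrib)
  also have "\<bar>\<dots>\<bar> \<le> (\<integral>r. \<bar>\<phi>' r * (signed_tail f \<omega> r - signed_tail f \<omega>' r)\<bar> \<partial>lborel)"
    by (rule integral_abs_bound)
  also have "\<dots> \<le> (\<integral>r. B * min \<delta> (1 / r\<^sup>2) \<partial>lborel)"
  proof (rule integral_mono)
    show "integrable lborel (\<lambda>r. \<bar>\<phi>' r * (signed_tail f \<omega> r - signed_tail f \<omega>' r)\<bar>)"
      using Bochner_Integration.integrable_diff[OF integrable_tail integrable_tail]
      by (intro integrable_abs) (simp add: algebra_simps)
    show "integrable lborel (\<lambda>r. B * min \<delta> (1 / r\<^sup>2))"
      using min_integral by (simp add: has_bochner_integral_iff)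
    show "\<bar>\<phi>' r * (signed_tail f \<omega> r - signed_tail f \<omega>' r)\<bar> \<le> B * min \<delta> (1 / r\<^sup>2)" for r
      unfolding abs_mult
      by (intro mult_mono bound signed_tail_diff_le[OF unit close]) (use bound[of 0] in auto)
  qed
  also have "\<dots> = B * (4 * sqrt \<delta>)"
    using min_integral by (simp add: has_bochner_integral_iff)
  finally show ?thesis .
qed

end

definition cos_transform :: "('a::euclidean_space \<Rightarrow> real) \<Rightarrow> 'a \<Rightarrow> real \<Rightarrow> real" where
  "cos_transform f v a = (\<integral>y. cos (a - v \<bullet> y) * f y \<partial>lebesgue)"

lemma (in isotropic_density) cos_transform_diff_le:
  assumes "0 < \<delta>"
    and close: "\<And>\<omega> \<omega>' r. norm \<omega> = 1 \<Longrightarrow> norm \<omega>' = 1 \<Longrightarrow> \<bar>Mf f \<omega> r - Mf f \<omega>' r\<bar> \<le> \<delta>"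
    and "norm v = norm z"
  shows "\<bar>cos_transform f v a - cos_transform f z a\<bar> \<le> 4 * sqrt \<delta> * norm z"
proof (cases "z = 0")
  case False
  define s where "s = norm z"
  have "0 < s"
    using False by (simp add: s_def)
  define \<omega> \<omega>' where "\<omega> = v /\<^sub>R s" and "\<omega>' = z /\<^sub>R s"
  have unit: "norm \<omega> = 1" "norm \<omega>' = 1"
    using \<open>0 < s\<close> assms(3) by (simp_all add: \<omega>_def \<omega>'_def s_def)
  have cos_transform_eq:
    "cos_transform f (s *\<^sub>R u) a = (\<integral>y. cos (a - s * (y \<bullet> u)) * f y \<partial>lebesgue)" for u
    by (simp add: cos_transform_def inner_commute)
  have "\<bar>cos_transform f (s *\<^sub>R \<omega>) a - cos_transform f (s *\<^sub>R \<omega>') a\<bar> \<le> \<bar>s\<bar> * (4 * sqrt \<delta>)"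
    unfolding cos_transform_eq
  proof (intro integral_comp_inner_diff_le[OF _ _ _ unit \<open>0 < \<delta>\<close> close[OF unit]])
    show "((\<lambda>u. cos (a - s * u)) has_real_derivative s * sin (a - s * r)) (at r)" for r
      by (auto intro!: derivative_eq_intros)
    show "\<bar>s * sin (a - s * r)\<bar> \<le> \<bar>s\<bar>" for r
      by (simp add: abs_mult mult_left_le)
  qed (intro continuous_intros)
  moreover have "s *\<^sub>R \<omega> = v" "s *\<^sub>R \<omega>' = z"
    using \<open>0 < s\<close> by (simp_all add: \<omega>_def \<omega>'_def)
  ultimately show ?thesis
    using \<open>0 < s\<close> by (simp add: s_def mult.commute)
qed (use assms(3) in simp)

definition orthogonal_involution :: "('a::real_inner \<Rightarrow> 'a) \<Rightarrow> bool" where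
  "orthogonal_involution R \<longleftrightarrow> linear R \<and> (\<forall>x. R (R x) = x) \<and> (\<forall>x y. R x \<bullet> y = x \<bullet> R y)"

lemma orthogonal_involution_id: "orthogonal_involution (\<lambda>x. x)"
  by (auto simp: orthogonal_involution_def intro: linearI)

lemma norm_orthogonal_involution:
  assumes "orthogonal_involution R"
  shows "norm (R x) = norm x"
proof -
  have "R x \<bullet> R x = x \<bullet> x"
    using assms by (simp add: orthogonal_involution_def)
  then show ?thesis
    by (simp add: norm_eq_sqrt_inner)
qed

lemma borel_measurable_orthogonal_involution:
  fixes R :: "'a::euclidean_space \<Rightarrow> 'a"
  assumes "orthogonal_involution R"
  shows "R \<in> borel_measurable borel"
  using assms unfolding orthogonal_involution_def
  by (intro borel_measurable_continuous_onI linear_continuous_on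
      linear_conv_bounded_linear[THEN iffD1]) simp

lemma orthogonal_involution_exists:
  fixes a b :: "'a::real_inner"
  assumes "norm a = norm b"
  obtains R where "orthogonal_involution R" "R a = b"
proof (cases "a = b")
  case True
  then show ?thesis
    using that orthogonal_involution_id by blast
next
  case False
  define u where "u = sgn (a - b)"
  have "u \<bullet> u = 1"
    using False by (simp add: u_def norm_eq_1[symmetric] norm_sgn)
  define R where "R x = x - (2 * (x \<bullet> u)) *\<^sub>R u" for x
  have "orthogonal_involution R"
    unfolding orthogonal_involution_def
  proof safe
    show "linear R"
      unfolding R_def by (intro linearI) (simp_all add: algebra_simps inner_add_left)
    show "R (R x) = x" for x
      using \<open>u \<bullet> u = 1\<close> by (simp add: R_def inner_diff_left algebra_simps)
    show "R x \<bullet> y = x \<bullet> R y" for x y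
      by (simp add: R_def inner_diff_left inner_diff_right inner_commute)
  qed
  moreover have "2 * (a \<bullet> u) = norm (a - b)"
  proof -
    have "a \<bullet> a = b \<bullet> b"
      using assms by (simp add: norm_eq_sqrt_inner)
    then have "2 * (a \<bullet> (a - b)) = (norm (a - b))\<^sup>2"
      by (simp add: power2_norm_eq_inner inner_diff_left inner_diff_right inner_commute)
    then show ?thesis
      using False unfolding u_def sgn_div_norm inner_scaleR_right
      by (simp add: field_simps power2_eq_square)
  qed
  then have "R a = b"
    using False by (simp add: R_def u_def sgn_div_norm)
  ultimately show ?thesis
    using that by blast
qed

lemma integrable_gauss_cos_pair:
  fixes f :: "'a::euclidean_space \<Rightarrow> real" and P :: "'a \<Rightarrow> 'a"
  assumes f: "integrable lebesgue f" and [measurable]: "P \<in> borel_measurable borel"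
  shows "integrable (lebesgue \<Otimes>\<^sub>M lborel) (\<lambda>(y, z). gauss 1 z * (cos (z \<bullet> x - P z \<bullet> y) * f y))"
proof (rule lebesgue_lborel.Fubini_integrable)
  note id_borel_measurable_lebesgue[unfolded id_def, measurable]
  have [measurable]: "f \<in> borel_measurable lebesgue"
    using f by auto
  let ?F = "\<lambda>y z. gauss 1 z * (cos (z \<bullet> x - P z \<bullet> y) * f y)"
  show "(\<lambda>(y, z). ?F y z) \<in> borel_measurable (lebesgue \<Otimes>\<^sub>M lborel)"
    by measurable
  have F_bound: "norm (?F y z) \<le> \<bar>f y\<bar> * gauss 1 z" for y z
    using gauss_nonneg[of 1 z] by (auto simp: abs_mult mult.commute intro!: mult_left_mono mult_left_le)
  have F_integrable: "integrable lborel (?F y)" for y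
    by (rule Bochner_Integration.integrable_bound[OF integrable_mult_right[OF integrable_gauss]])
      (use F_bound in \<open>auto intro: order_trans[OF _ abs_ge_self]\<close>)
  then show "AE y in lebesgue. integrable lborel (\<lambda>z. case (y, z) of (y, z) \<Rightarrow> ?F y z)"
    by simp
  have "(\<integral>z. norm (?F y z) \<partial>lborel) \<le> (\<integral>z. \<bar>f y\<bar> * gauss 1 (z::'a) \<partial>lborel)" for y
    by (intro integral_mono integrable_norm F_integrable integrable_mult_right integrable_gauss F_bound)
  then have "(\<integral>z. norm (?F y z) \<partial>lborel) \<le> \<bar>f y\<bar>" for y
    by (simp add: integral_gauss)
  then show "integrable lebesgue (\<lambda>y. \<integral>z. norm (case (y, z) of (y, z) \<Rightarrow> ?F y z) \<partial>lborel)"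
    by (intro Bochner_Integration.integrable_bound[OF integrable_abs[OF f]])
      (auto intro: order_trans[OF _ abs_ge_self])
qed

lemma
  fixes f :: "'a::euclidean_space \<Rightarrow> real"
  assumes f: "integrable lebesgue f" and R: "orthogonal_involution R"
  shows integrable_gauss_cos_transform:
      "integrable lborel (\<lambda>z. gauss 1 z * cos_transform f (R z) (z \<bullet> x))"
    and conv_gauss_eq_integral_cos_transform:
      "conv f (gauss 1) (R x)
         = (2 * pi) powr (- real DIM('a) / 2)
           * (\<integral>z. gauss 1 z * cos_transform f (R z) (z \<bullet> x) \<partial>lborel)"
proof -
  have R_linear: "linear R" and R_adjoint: "R z \<bullet> y = z \<bullet> R y"
    and R_involution: "R (R y) = y" for y z
    using R by (simp_all add: orthogonal_involution_def)
  define F where "F y z = gauss 1 z * (cos (z \<bullet> x - R z \<bullet> y) * f y)" for y z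
  have F_pair_integrable: "integrable (lebesgue \<Otimes>\<^sub>M lborel) (\<lambda>(y, z). F y z)"
    unfolding F_def using f borel_measurable_orthogonal_involution[OF R] by (rule integrable_gauss_cos_pair)
  have F_integral_fst: "(\<integral>y. F y z \<partial>lebesgue) = gauss 1 z * cos_transform f (R z) (z \<bullet> x)" for z
    unfolding F_def cos_transform_def by simp
  show "integrable lborel (\<lambda>z. gauss 1 z * cos_transform f (R z) (z \<bullet> x))"
    using lebesgue_lborel.integrable_snd[OF F_pair_integrable] by (simp add: F_integral_fst)
  have gauss_eq:
    "f y * gauss 1 (R x - y) = (2 * pi) powr (- real DIM('a) / 2) * (\<integral>z. F y z \<partial>lborel)"
    for y
  proof -
    have "R x - y = R (x - R y)"
      using R_linear R_involution by (simp add: linear_diff)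
    then have "gauss 1 (R x - y) = gauss 1 (x - R y)"
      using norm_orthogonal_involution[OF R] by (simp add: gauss_def)
    also have "\<dots> = (2 * pi) powr (- real DIM('a) / 2)
        * (\<integral>z. gauss 1 z * cos (z \<bullet> x - R z \<bullet> y) \<partial>lborel)"
      by (subst gauss_eq_integral_cos) (simp add: inner_diff_right R_adjoint mult.commute)
    finally show ?thesis
      by (simp add: F_def mult.assoc[symmetric] mult.commute[of "f y"] mult.left_commute[of "f y"])
  qed
  have "conv f (gauss 1) (R x)
      = (\<integral>y. (2 * pi) powr (- real DIM('a) / 2) * (\<integral>z. F y z \<partial>lborel) \<partial>lebesgue)"
    unfolding conv_def gauss_eq ..
  also have "\<dots> = (2 * pi) powr (- real DIM('a) / 2) * (\<integral>z. (\<integral>y. F y z \<partial>lebesgue) \<partial>lborel)"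
    using lebesgue_lborel.Fubini_integral[OF F_pair_integrable] by simp
  finally show "conv f (gauss 1) (R x)
      = (2 * pi) powr (- real DIM('a) / 2)
        * (\<integral>z. gauss 1 z * cos_transform f (R z) (z \<bullet> x) \<partial>lborel)"
    by (simp add: F_integral_fst)
qed

lemma (in isotropic_density) integral_gauss_cos_transform_diff_le:
  assumes R: "orthogonal_involution R" and \<delta>: "0 < \<delta>"
    and close: "\<And>\<omega> \<omega>' r. norm \<omega> = 1 \<Longrightarrow> norm \<omega>' = 1 \<Longrightarrow> \<bar>Mf f \<omega> r - Mf f \<omega>' r\<bar> \<le> \<delta>"
  shows "\<bar>\<integral>z. gauss 1 z * (cos_transform f (R z) (z \<bullet> x) - cos_transform f z (z \<bullet> x)) \<partial>lborel\<bar>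
           \<le> 4 * sqrt \<delta> * real DIM('a)"
proof -
  let ?D = "\<lambda>z. gauss 1 z * (cos_transform f (R z) (z \<bullet> x) - cos_transform f z (z \<bullet> x))"
  have "integrable lborel ?D"
    using Bochner_Integration.integrable_diff[OF integrable_gauss_cos_transform[OF integrable R]
        integrable_gauss_cos_transform[OF integrable orthogonal_involution_id]]
    by (simp add: right_diff_distrib)
  have "\<bar>\<integral>z. ?D z \<partial>lborel\<bar> \<le> (\<integral>z. \<bar>?D z\<bar> \<partial>lborel)"
    by (rule integral_abs_bound)
  also have "\<dots> \<le> (\<integral>z. 4 * sqrt \<delta> * (norm z * gauss 1 (z::'a)) \<partial>lborel)"
  proof (rule Bochner_Integration.integral_mono)
    show "integrable lborel (\<lambda>z. \<bar>?D z\<bar>)"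
      using \<open>integrable lborel ?D\<close> by auto
    show "integrable lborel (\<lambda>z::'a. 4 * sqrt \<delta> * (norm z * gauss 1 z))"
      by (intro integrable_mult_right integrable_norm_gauss)
    fix z
    have "\<bar>?D z\<bar> = gauss 1 z * \<bar>cos_transform f (R z) (z \<bullet> x) - cos_transform f z (z \<bullet> x)\<bar>"
      by (simp add: abs_mult gauss_nonneg)
    also have "\<dots> \<le> gauss 1 z * (4 * sqrt \<delta> * norm z)"
      by (intro mult_left_mono gauss_nonneg
          cos_transform_diff_le[OF \<delta> close norm_orthogonal_involution[OF R]])
    finally show "\<bar>?D z\<bar> \<le> 4 * sqrt \<delta> * (norm z * gauss 1 z)"
      by (simp only: ac_simps)
  qed
  also have "\<dots> \<le> 4 * sqrt \<delta> * real DIM('a)"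
    using integral_norm_gauss_le \<delta> by simp
  finally show ?thesis .
qed

lemma (in isotropic_density) conv_gauss_diff_le:
  assumes "norm x = norm y" and \<delta>: "0 < \<delta>"
    and close: "\<And>\<omega> \<omega>' r. norm \<omega> = 1 \<Longrightarrow> norm \<omega>' = 1 \<Longrightarrow> \<bar>Mf f \<omega> r - Mf f \<omega>' r\<bar> \<le> \<delta>"
  shows "\<bar>conv f (gauss 1) y - conv f (gauss 1) x\<bar>
           \<le> (2 * pi) powr (- real DIM('a) / 2) * (4 * sqrt \<delta> * real DIM('a))"
proof -
  obtain R where R: "orthogonal_involution R" "R x = y"
    using orthogonal_involution_exists[OF assms(1)] .
  define c where "c = (2 * pi) powr (- real DIM('a) / 2)"
  have "0 \<le> c"
    by (simp add: c_def)
  have "conv f (gauss 1) y - conv f (gauss 1) x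
      = c * ((\<integral>z. gauss 1 z * cos_transform f (R z) (z \<bullet> x) \<partial>lborel)
           - (\<integral>z. gauss 1 z * cos_transform f z (z \<bullet> x) \<partial>lborel))"
    using conv_gauss_eq_integral_cos_transform[OF integrable R(1), of x]
      conv_gauss_eq_integral_cos_transform[OF integrable orthogonal_involution_id, of x]
    by (simp add: R(2) c_def right_diff_distrib)
  also have "\<dots> = c * (\<integral>z. gauss 1 z
      * (cos_transform f (R z) (z \<bullet> x) - cos_transform f z (z \<bullet> x)) \<partial>lborel)"
    using integrable_gauss_cos_transform[OF integrable R(1)]
      integrable_gauss_cos_transform[OF integrable orthogonal_involution_id]
    by (simp add: right_diff_distrib)
  finally have "\<bar>conv f (gauss 1) y - conv f (gauss 1) x\<bar>
      = c * \<bar>\<integral>z. gauss 1 z * (cos_transform f (R z) (z \<bullet> x) - cos_transform f z (z \<bullet> x)) \<partial>lborel\<bar>"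
    using \<open>0 \<le> c\<close> by (simp add: abs_mult)
  also have "\<dots> \<le> c * (4 * sqrt \<delta> * real DIM('a))"
    using \<open>0 \<le> c\<close> by (intro mult_left_mono integral_gauss_cos_transform_diff_le[OF R(1) \<delta> close])
  finally show ?thesis
    unfolding c_def .
qed

lemma dimension_factor_le_exp:
  fixes \<alpha> :: real and n :: nat
  assumes "8 \<le> 3 * \<alpha>"
  shows "(2 * pi) powr (- real n / 2) * (4 * sqrt (exp (- 5 * \<alpha> * n)) * n) \<le> exp (- \<alpha> * n)"
proof -
  have "1 \<le> (2 * pi) powr (real n / 2)"
    using pi_gt3 by (intro ge_one_powr_ge_zero) auto
  then have "(2 * pi) powr (- real n / 2) \<le> 1"
    by (simp add: powr_minus inverse_le_1_iff)
  then have "(2 * pi) powr (- real n / 2) * (4 * sqrt (exp (- 5 * \<alpha> * n)) * n)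
      \<le> 4 * sqrt (exp (- 5 * \<alpha> * n)) * n"
    by (intro mult_left_le_one_le) simp_all
  also have "4 * sqrt (exp (- 5 * \<alpha> * n)) * n \<le> exp (- \<alpha> * n)"
  proof -
    have "8 * real n \<le> 3 * \<alpha> * n"
      using assms by (intro mult_right_mono) auto
    then have "4 * real n \<le> 1 + 3 * \<alpha> * n / 2"
      by linarith
    also have "\<dots> \<le> exp (3 * \<alpha> * n / 2)"
      by (rule exp_ge_add_one_self[unfolded add.commute[of _ 1]])
    finally have growth: "4 * real n \<le> exp (3 * \<alpha> * n / 2)" .
    have "sqrt (exp (- 5 * \<alpha> * n)) = exp (- 5 * \<alpha> * n / 2)"
      by (rule real_sqrt_unique) (simp_all add: power2_eq_square flip: exp_add)
    then have "4 * sqrt (exp (- 5 * \<alpha> * n)) * n = 4 * real n * exp (- 5 * \<alpha> * n / 2)"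
      by simp
    also have "\<dots> \<le> exp (3 * \<alpha> * n / 2) * exp (- 5 * \<alpha> * n / 2)"
      by (rule mult_right_mono[OF growth]) simp
    also have "\<dots> = exp (- \<alpha> * n)"
      by (simp flip: exp_add)
    finally show ?thesis .
  qed
  finally show ?thesis .
qed

lemma cSUP_le_add_cINF:
  fixes g :: "'a \<Rightarrow> real"
  assumes "S \<noteq> {}" and "\<And>x y. x \<in> S \<Longrightarrow> y \<in> S \<Longrightarrow> g x \<le> e + g y"
  shows "(SUP x\<in>S. g x) \<le> e + (INF y\<in>S. g y)"
proof (rule cSUP_least[OF assms(1)])
  fix x
  assume "x \<in> S"
  then have "g x - e \<le> (INF y\<in>S. g y)"
    using assms by (intro cINF_greatest) (auto simp: algebra_simps)
  then show "g x \<le> e + (INF y\<in>S. g y)"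
    by simp
qed

lemma le_add_of_cSUP_le_add_cINF:
  fixes g :: "'a \<Rightarrow> real"
  assumes "bdd_above (g ` S)" "bdd_below (g ` S)" "(SUP x\<in>S. g x) \<le> e + (INF y\<in>S. g y)"
    and "x \<in> S" "y \<in> S"
  shows "g x \<le> e + g y"
  using cSUP_upper[OF assms(4,1)] cINF_lower[OF assms(2,5)] assms(3) by linarith

lemma (in isotropic_density) Mf_diff_le_of_SUP_le_INF:
  assumes "\<And>t. (SUP \<theta>\<in>sphere 0 1. Mf f \<theta> t) \<le> \<delta> + (INF \<theta>\<in>sphere 0 1. Mf f \<theta> t)"
    and "norm \<omega> = 1" "norm \<omega>' = 1"
  shows "\<bar>Mf f \<omega> r - Mf f \<omega>' r\<bar> \<le> \<delta>"
proof -
  have bdd_above: "bdd_above ((\<lambda>\<theta>. Mf f \<theta> r) ` S)" for S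
    by (rule bdd_aboveI[of _ 1]) (auto simp: Mf_le_1)
  have bdd_below: "bdd_below ((\<lambda>\<theta>. Mf f \<theta> r) ` S)" for S
    by (rule bdd_belowI[of _ 0]) (auto simp: Mf_nonneg)
  have "Mf f \<omega> r \<le> \<delta> + Mf f \<omega>' r" "Mf f \<omega>' r \<le> \<delta> + Mf f \<omega> r"
    using assms(2,3) by (intro le_add_of_cSUP_le_add_cINF[OF bdd_above bdd_below assms(1)]; simp)+
  then show ?thesis
    by linarith
qed

theorem lemma4p2:
  fixes f :: "'a::euclidean_space \<Rightarrow> real" and \<alpha> :: real
  assumes "\<alpha> \<ge> 5"
    and "\<And>x. f x \<ge> 0"
    and "isotropic f"
    and "log_concave f"
    and "\<And>t. (SUP \<theta>\<in>sphere 0 1. Mf f \<theta> t)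
               \<le> exp (- 5 * \<alpha> * real DIM('a)) + (INF \<theta>\<in>sphere 0 1. Mf f \<theta> t)"
  shows "\<forall>t\<ge>0. (SUP \<theta>\<in>sphere 0 1. conv f (gauss 1) (t *\<^sub>R \<theta>))
               \<le> exp (- \<alpha> * real DIM('a)) + (INF \<theta>\<in>sphere 0 1. conv f (gauss 1) (t *\<^sub>R \<theta>))"
proof (intro allI impI cSUP_le_add_cINF)
  interpret isotropic_density f
    using assms(2,3) by unfold_locales
  define \<delta> where "\<delta> = exp (- 5 * \<alpha> * real DIM('a))"
  fix t :: real and \<theta> \<theta>' :: 'a
  assume "\<theta> \<in> sphere 0 1" "\<theta>' \<in> sphere 0 1"
  then have "\<bar>conv f (gauss 1) (t *\<^sub>R \<theta>') - conv f (gauss 1) (t *\<^sub>R \<theta>)\<bar>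
      \<le> (2 * pi) powr (- real DIM('a) / 2) * (4 * sqrt \<delta> * real DIM('a))"
    by (intro conv_gauss_diff_le Mf_diff_le_of_SUP_le_INF[OF assms(5)[folded \<delta>_def]])
      (simp_all add: \<delta>_def)
  also have "\<dots> \<le> exp (- \<alpha> * real DIM('a))"
    unfolding \<delta>_def by (rule dimension_factor_le_exp) (use assms(1) in linarith)
  finally show "conv f (gauss 1) (t *\<^sub>R \<theta>) \<le> exp (- \<alpha> * real DIM('a)) + conv f (gauss 1) (t *\<^sub>R \<theta>')"
    by linarith
qed simp

end
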